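(* Let $X$ be a proper geodesic metric space with base point $o$, and let $\epsilon\in(0,1)$. Let $\beta$ be a geodesic ray with $\beta(0)=o$ and let $\gamma$ be a $(q,Q)$-ray. Suppose there is an increasing sequence $r_1<r_2<\cdots$ with $r_n\to\infty$ such that $d(\beta(r_n),\gamma)\le\epsilon r_n$ for every $n$. Then $\gamma$ can be $(9q,Q)$-quasi-redirected to $\beta$.
   Context: A $(q,Q)$-quasi-geodesic satisfies $\frac{|s-t|}{q}-Q\le d(\alpha(s),\alpha(t))\le q|s-t|+Q$; a $(q,Q)$-ray is a $(q,Q)$-quasi-geodesic ray $\alpha\colon[0,\infty)\to X$ with $\alpha(0)=o$. A ray $\gamma'$ eventually coincides with $\beta$ if there are $t_\beta,t_{\gamma'}>0$ with $\gamma'(t)=\beta(t+t_\beta)$ for $t\ge t_{\gamma'}$. The ray $\gamma$ can be $(q',Q')$-quasi-redirected to $\beta$ if for every $r>0$ there is a $(q',Q')$-ray $\gamma'$ that coincides with $\gamma$ inside the closed ball of radius $r$ about $o$ (until $\gamma$ first leaves it) and eventually coincides with $\beta$. *)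

theory Defs
  imports "HOL-Analysis.Analysis"
begin

definition geodesic_space :: "('a::metric_space) itself \<Rightarrow> bool" where
  "geodesic_space _ \<longleftrightarrow>
     (\<forall>x y::'a. \<exists>g::real \<Rightarrow> 'a. g 0 = x \<and> g (dist x y) = y \<and>
        (\<forall>s\<in>{0..dist x y}. \<forall>t\<in>{0..dist x y}. dist (g s) (g t) = \<bar>s - t\<bar>))"

definition geodesic_ray :: "'a::metric_space \<Rightarrow> (real \<Rightarrow> 'a) \<Rightarrow> bool" where
  "geodesic_ray o' \<beta> \<longleftrightarrow> \<beta> 0 = o' \<and>
     (\<forall>s\<ge>0. \<forall>t\<ge>0. dist (\<beta> s) (\<beta> t) = \<bar>s - t\<bar>)"

definition quasi_ray :: "'a::metric_space \<Rightarrow> real \<Rightarrow> real \<Rightarrow> (real \<Rightarrow> 'a) \<Rightarrow> bool" where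
  "quasi_ray o' q Q \<alpha> \<longleftrightarrow> \<alpha> 0 = o' \<and>
     (\<forall>s\<ge>0. \<forall>t\<ge>0. \<bar>s - t\<bar> / q - Q \<le> dist (\<alpha> s) (\<alpha> t) \<and>
                    dist (\<alpha> s) (\<alpha> t) \<le> q * \<bar>s - t\<bar> + Q)"

definition eventually_coincides :: "(real \<Rightarrow> 'a) \<Rightarrow> (real \<Rightarrow> 'a) \<Rightarrow> bool" where
  "eventually_coincides \<gamma>' \<beta> \<longleftrightarrow>
     (\<exists>t\<^sub>\<beta> t\<^sub>\<gamma> :: real. t\<^sub>\<beta> > 0 \<and> t\<^sub>\<gamma> > 0 \<and> (\<forall>t\<ge>t\<^sub>\<gamma>. \<gamma>' t = \<beta> (t + t\<^sub>\<beta>)))"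

definition coincides_in_ball :: "'a::metric_space \<Rightarrow> real \<Rightarrow> (real \<Rightarrow> 'a) \<Rightarrow> (real \<Rightarrow> 'a) \<Rightarrow> bool" where
  "coincides_in_ball o' r \<gamma>' \<gamma> \<longleftrightarrow>
     (\<forall>t\<ge>0. \<gamma> ` {0..t} \<subseteq> cball o' r \<longrightarrow> \<gamma>' t = \<gamma> t)"

definition quasi_redirected :: "'a::metric_space \<Rightarrow> real \<Rightarrow> real \<Rightarrow> (real \<Rightarrow> 'a) \<Rightarrow> (real \<Rightarrow> 'a) \<Rightarrow> bool" where
  "quasi_redirected o' q' Q' \<gamma> \<beta> \<longleftrightarrow>
     (\<forall>r>0. \<exists>\<gamma>'. quasi_ray o' q' Q' \<gamma>' \<and> coincides_in_ball o' r \<gamma>' \<gamma> \<and>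
                 eventually_coincides \<gamma>' \<beta>)"

end

theory Submission
  imports Defs
begin

text \<open>Choose a time t0 \<le> T on \<gamma> and a parameter \<rho> on \<beta> that minimise, up to the additive
  error Q, the function (t, \<rho>) \<mapsto> d(\<gamma>(t), \<beta>(\<rho>)) - \<rho>/2. The redirected ray follows \<gamma> up to t0,
  runs along a geodesic from \<gamma>(t0) to \<beta>(\<rho>) at speed 2 and then follows \<beta>. Quasi-minimality
  says that no \<gamma>(s) with s \<le> t0 is closer to \<beta>(\<rho>') than d(\<gamma>(t0), \<beta>(\<rho>)) + (\<rho>' - \<rho>)/2 - Q;
  together with the triangle inequality this yields the lower bounds of a (9q, Q)-ray. If \<gamma>(T) is
  close to a far point \<beta>(r n), which the hypothesis on the sequence provides, comparing with
  the pair (T, \<rho>) forces \<gamma>(t0) outside any prescribed ball.\<close>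

lemma quasi_rayI_ordered:
  assumes "p 0 = o'"
    and "\<And>s t. 0 \<le> s \<Longrightarrow> s \<le> t \<Longrightarrow>
           (t - s)/q - Q \<le> dist (p s) (p t) \<and> dist (p s) (p t) \<le> q * (t - s) + Q"
  shows "quasi_ray o' q Q p"
proof -
  have "\<bar>s - t\<bar>/q - Q \<le> dist (p s) (p t) \<and> dist (p s) (p t) \<le> q * \<bar>s - t\<bar> + Q"
    if "0 \<le> s" "0 \<le> t" for s t
    using that assms(2)[of s t] assms(2)[of t s] by (cases "s \<le> t") (auto simp: dist_commute)
  then show ?thesis
    using assms(1) unfolding quasi_ray_def by blast
qed

lemma quasi_ray_Q_nonneg: "quasi_ray o' q Q \<gamma> \<Longrightarrow> 0 \<le> Q"
  unfolding quasi_ray_def by force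

lemma quasi_ray_dist_base:
  assumes "quasi_ray o' q Q \<gamma>" "0 \<le> t"
  shows "dist o' (\<gamma> t) \<le> q * t + Q"
  using assms unfolding quasi_ray_def by force

lemma quasi_ray_lipschitz:
  assumes "quasi_ray o' q 0 \<gamma>"
  shows "q-lipschitz_on {0..} \<gamma>"
proof (rule lipschitz_onI)
  have "\<forall>s\<ge>0. \<forall>t\<ge>0. dist (\<gamma> s) (\<gamma> t) \<le> q * \<bar>s - t\<bar>"
    using assms unfolding quasi_ray_def by simp
  from this[rule_format, of 0 1] have "dist (\<gamma> 0) (\<gamma> 1) \<le> q"
    by simp
  then show "0 \<le> q"
    using zero_le_dist[of "\<gamma> 0" "\<gamma> 1"] by linarith
qed (use assms in \<open>auto simp: quasi_ray_def dist_real_def\<close>)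

lemma geodesic_ray_dist_base: "geodesic_ray o' \<beta> \<Longrightarrow> 0 \<le> s \<Longrightarrow> dist o' (\<beta> s) = s"
  unfolding geodesic_ray_def by force

lemma geodesic_ray_lipschitz: "geodesic_ray o' \<beta> \<Longrightarrow> 1-lipschitz_on {0..} \<beta>"
  unfolding geodesic_ray_def by (intro lipschitz_onI) (auto simp: dist_real_def)

lemma quasi_ray_ge_one:
  assumes \<gamma>: "quasi_ray o' q Q \<gamma>" and unbounded: "\<not> bounded (\<gamma> ` {0..})"
  shows "1 \<le> q"
proof (rule ccontr)
  assume "\<not> 1 \<le> q"
  show False
  proof (cases "0 < q")
    case True
    define c where "c = 1/q - q"
    have "q * q < 1 * 1"
      using True \<open>\<not> 1 \<le> q\<close> by (intro mult_strict_mono) auto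
    then have "0 < c"
      using True by (simp add: c_def field_simps)
    define t where "t = (2*Q + 1)/c"
    have "0 \<le> t"
      using \<open>0 < c\<close> quasi_ray_Q_nonneg[OF \<gamma>] by (simp add: t_def)
    then have "t/q - Q \<le> q*t + Q"
      using \<gamma> unfolding quasi_ray_def by force
    moreover have "t/q - q*t = c*t"
      by (simp add: c_def algebra_simps)
    moreover have "c*t = 2*Q + 1"
      using \<open>0 < c\<close> by (simp add: t_def)
    ultimately show False by linarith
  next
    case False
    have "dist o' (\<gamma> t) \<le> Q" if "0 \<le> t" for t
      using quasi_ray_dist_base[OF \<gamma> that] mult_nonpos_nonneg[of q t] False that by linarith
    then have "\<gamma> ` {0..} \<subseteq> cball o' Q"
      by auto
    then show False
      using unbounded bounded_cball bounded_subset by blast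
  qed
qed

text \<open>Here a is the part of a time interval spent along the quasi-geodesic \<gamma> and b the part
  spent along geodesics.\<close>

lemma nine_q_bounds:
  fixes q Q a b x :: real
  assumes "1 \<le> q" "0 \<le> a" "0 \<le> b"
    and lower: "a/q + b \<le> 9*x + 9*Q" and upper: "x \<le> q*a + b + b + Q"
  shows "(a + b)/(9*q) - Q \<le> x \<and> x \<le> 9*q*(a + b) + Q"
proof
  have "b/q \<le> b"
    using assms by (simp add: divide_le_eq mult_left_mono[of 1 q b, simplified] mult.commute)
  have "(a + b)/(9*q) = (a/q + b/q)/9"
    by (simp add: add_divide_distrib)
  also have "\<dots> \<le> (a/q + b)/9"
    using \<open>b/q \<le> b\<close> by (intro divide_right_mono add_left_mono) simp_all
  also have "\<dots> \<le> x + Q"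
    using lower by simp
  finally show "(a + b)/(9*q) - Q \<le> x"
    by simp
  show "x \<le> 9*q*(a + b) + Q"
    using upper mult_left_mono[of 1 q a] mult_left_mono[of 1 q b] assms
    by (simp add: algebra_simps)
qed

lemma exists_approx_minimizer:
  fixes f :: "'a \<Rightarrow> real"
  assumes "S \<noteq> {}" "bdd_below (f ` S)" "0 < \<delta>"
  obtains p where "p \<in> S" "\<And>x. x \<in> S \<Longrightarrow> f p \<le> f x + \<delta>"
proof -
  have "(INF x\<in>S. f x) < (INF x\<in>S. f x) + \<delta>"
    using assms(3) by simp
  then obtain p where "p \<in> S" "f p < (INF x\<in>S. f x) + \<delta>"
    using cINF_less_iff[OF assms(1,2)] by blast
  then show thesis
    using that cINF_lower[OF assms(2)] by force
qed

lemma continuous_coercive_attains_inf: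
  fixes f :: "'a::topological_space \<times> real \<Rightarrow> real"
  assumes "compact K" "K \<noteq> {}" "continuous_on (K \<times> {A..}) f" "0 < c"
    and coercive: "\<And>x. x \<in> K \<times> {A..} \<Longrightarrow> c * snd x - M \<le> f x"
  obtains p where "p \<in> K \<times> {A..}" "\<And>x. x \<in> K \<times> {A..} \<Longrightarrow> f p \<le> f x"
proof -
  obtain k where k: "k \<in> K"
    using assms(2) by blast
  define B where "B = max A ((f (k, A) + M) / c)"
  have "compact (K \<times> {A..B})" "K \<times> {A..B} \<noteq> {}"
    using assms(1,2) by (auto intro: compact_Times simp: B_def)
  moreover have "continuous_on (K \<times> {A..B}) f"
    using assms(3) by (rule continuous_on_subset) auto
  ultimately have "\<exists>p\<in>K \<times> {A..B}. \<forall>x\<in>K \<times> {A..B}. f p \<le> f x"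
    by (rule continuous_attains_inf)
  then obtain p where p: "p \<in> K \<times> {A..B}" "\<And>x. x \<in> K \<times> {A..B} \<Longrightarrow> f p \<le> f x"
    by blast
  have "f p \<le> f x" if x: "x \<in> K \<times> {A..}" for x
  proof (cases "snd x \<le> B")
    case True
    then show ?thesis
      using p(2) x by (cases x) auto
  next
    case False
    then have "(f (k, A) + M) / c < snd x"
      by (simp add: B_def)
    then have "f (k, A) + M < c * snd x"
      using \<open>0 < c\<close> by (simp add: pos_divide_less_eq mult.commute)
    moreover have "f p \<le> f (k, A)"
      using p(2) k by (simp add: B_def)
    ultimately show ?thesis
      using coercive[OF x] by linarith
  qed
  then show thesis
    using that p(1) by auto
qed

lemma exists_quasi_minimal_pair:
  assumes \<gamma>: "quasi_ray o' q Q \<gamma>" and \<beta>: "geodesic_ray o' \<beta>" and "0 \<le> T" "0 \<le> A"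
  obtains t0 \<rho> where "0 \<le> t0" "t0 \<le> T" "A \<le> \<rho>"
    "\<And>t \<rho>'. 0 \<le> t \<Longrightarrow> t \<le> T \<Longrightarrow> A \<le> \<rho>' \<Longrightarrow>
       dist (\<gamma> t0) (\<beta> \<rho>) - \<rho>/2 \<le> dist (\<gamma> t) (\<beta> \<rho>') - \<rho>'/2 + Q"
proof -
  define S where "S = {0..T} \<times> {A..}"
  define H where "H p = dist (\<gamma> (fst p)) (\<beta> (snd p)) - snd p / 2" for p
  have coercive: "1/2 * snd p - (\<bar>q\<bar> * T + Q) \<le> H p" if "p \<in> S" for p
  proof -
    have "dist o' (\<beta> (snd p)) \<le> dist o' (\<gamma> (fst p)) + dist (\<gamma> (fst p)) (\<beta> (snd p))"
      by (rule dist_triangle)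
    moreover have "q * fst p \<le> \<bar>q\<bar> * fst p" "\<bar>q\<bar> * fst p \<le> \<bar>q\<bar> * T"
      using that by (auto simp: S_def intro: mult_right_mono mult_left_mono)
    ultimately show ?thesis
      using that quasi_ray_dist_base[OF \<gamma>, of "fst p"] geodesic_ray_dist_base[OF \<beta>, of "snd p"] \<open>0 \<le> A\<close>
      by (auto simp: S_def H_def)
  qed
  have "\<exists>p\<in>S. \<forall>x\<in>S. H p \<le> H x + Q"
  proof (cases "Q = 0")
    case True
    \<comment> \<open>no slack: an exact minimiser is needed, and it exists because \<gamma> is now continuous\<close>
    have "continuous_on {0..} \<gamma>" "continuous_on {0..} \<beta>"
      using \<gamma> \<beta> True by (auto intro: lipschitz_on_continuous_on quasi_ray_lipschitz geodesic_ray_lipschitz)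
    then have "continuous_on S H"
      unfolding S_def H_def using \<open>0 \<le> A\<close>
      by (auto intro!: continuous_intros elim!: continuous_on_compose2)
    moreover have "{0..T} \<noteq> {}"
      using \<open>0 \<le> T\<close> by simp
    ultimately obtain p where "p \<in> S" "\<And>x. x \<in> S \<Longrightarrow> H p \<le> H x"
      using continuous_coercive_attains_inf[OF compact_Icc, of 0 T A H "1/2" "\<bar>q\<bar> * T + Q"] coercive
      unfolding S_def by auto
    then show ?thesis
      using True by (metis add_0_right)
  next
    case False
    then have "0 < Q"
      using quasi_ray_Q_nonneg[OF \<gamma>] by simp
    have "bdd_below (H ` S)"
    proof (rule bdd_belowI2)
      fix p assume "p \<in> S"
      then show "A/2 - (\<bar>q\<bar> * T + Q) \<le> H p"
        using coercive[of p] by (auto simp: S_def)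
    qed
    moreover have "S \<noteq> {}"
      using \<open>0 \<le> T\<close> by (auto simp: S_def)
    ultimately obtain p where "p \<in> S" "\<And>x. x \<in> S \<Longrightarrow> H p \<le> H x + Q"
      using exists_approx_minimizer \<open>0 < Q\<close> by metis
    then show ?thesis
      by blast
  qed
  then obtain t0 \<rho> where "(t0, \<rho>) \<in> S" "\<And>x. x \<in> S \<Longrightarrow> H (t0, \<rho>) \<le> H x + Q"
    by auto
  then show thesis
    by (intro that) (auto simp: S_def H_def)
qed

lemma far_redirection_point:
  assumes \<gamma>: "quasi_ray o' q Q \<gamma>" and \<beta>: "geodesic_ray o' \<beta>"
    and "0 \<le> r" "0 \<le> t1" and close: "R + Q + dist (\<beta> r) (\<gamma> t1) < r"
  obtains t0 \<rho> where "0 \<le> t0" "0 \<le> \<rho>" "R < dist o' (\<gamma> t0)"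
    "t0 + dist (\<gamma> t0) (\<beta> \<rho>) / 2 < \<rho>"
    "\<And>t \<rho>'. 0 \<le> t \<Longrightarrow> t \<le> t0 \<Longrightarrow> \<rho> \<le> \<rho>' \<Longrightarrow>
       dist (\<gamma> t0) (\<beta> \<rho>) + (\<rho>' - \<rho>)/2 - Q \<le> dist (\<gamma> t) (\<beta> \<rho>')"
proof -
  define M where "M = \<bar>q\<bar> * t1 + Q"
  define A where "A = max r (2*t1 + M + 1)"
  have "0 \<le> A"
    using \<open>0 \<le> r\<close> by (simp add: A_def)
  obtain t0 \<rho> where t0: "0 \<le> t0" "t0 \<le> t1" and "A \<le> \<rho>"
    and minimal: "\<And>t \<rho>'. 0 \<le> t \<Longrightarrow> t \<le> t1 \<Longrightarrow> A \<le> \<rho>' \<Longrightarrow>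
       dist (\<gamma> t0) (\<beta> \<rho>) - \<rho>/2 \<le> dist (\<gamma> t) (\<beta> \<rho>') - \<rho>'/2 + Q"
    using exists_quasi_minimal_pair[OF \<gamma> \<beta> \<open>0 \<le> t1\<close> \<open>0 \<le> A\<close>] by blast
  then have \<rho>: "r \<le> \<rho>" "2*t1 + M + 1 \<le> \<rho>"
    by (auto simp: A_def)
  define D where "D = dist (\<gamma> t0) (\<beta> \<rho>)"
  have base_t0: "dist o' (\<gamma> t0) \<le> M"
    using quasi_ray_dist_base[OF \<gamma> t0(1)] mult_right_mono[OF abs_ge_self, of t0 q]
      mult_left_mono[OF t0(2), of "\<bar>q\<bar>"] t0 by (simp add: M_def)
  have base_\<rho>: "dist o' (\<beta> \<rho>) = \<rho>"
    using geodesic_ray_dist_base[OF \<beta>] \<rho> \<open>0 \<le> r\<close> by simp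
  have "R < dist o' (\<gamma> t0)"
  proof -
    \<comment> \<open>compare with the pair (t1, \<rho>), which is good because \<gamma>(t1) is close to \<beta>(r)\<close>
    have "D \<le> dist (\<gamma> t1) (\<beta> \<rho>) + Q"
      using minimal[of t1 \<rho>] \<open>0 \<le> t1\<close> \<open>A \<le> \<rho>\<close> by (simp add: D_def)
    also have "\<dots> \<le> dist (\<gamma> t1) (\<beta> r) + dist (\<beta> r) (\<beta> \<rho>) + Q"
      using dist_triangle by simp
    also have "dist (\<beta> r) (\<beta> \<rho>) = \<rho> - r"
      using \<beta> \<rho> \<open>0 \<le> r\<close> unfolding geodesic_ray_def by force
    finally have "D \<le> dist (\<beta> r) (\<gamma> t1) + \<rho> - r + Q"
      by (simp add: dist_commute)
    moreover have "\<rho> \<le> dist o' (\<gamma> t0) + D"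
      using dist_triangle[of o' "\<beta> \<rho>" "\<gamma> t0"] base_\<rho> by (simp add: D_def)
    ultimately show ?thesis
      using close by linarith
  qed
  moreover have "t0 + D/2 < \<rho>"
    using dist_triangle[of "\<gamma> t0" "\<beta> \<rho>" o'] base_t0 base_\<rho> t0 \<rho>
    by (simp add: D_def dist_commute)
  moreover have "D + (\<rho>' - \<rho>)/2 - Q \<le> dist (\<gamma> t) (\<beta> \<rho>')"
    if "0 \<le> t" "t \<le> t0" "\<rho> \<le> \<rho>'" for t \<rho>'
    using minimal[OF that(1) order_trans[OF that(2) t0(2)] order_trans[OF \<open>A \<le> \<rho>\<close> that(3)]]
    unfolding D_def by (simp add: field_simps)
  moreover have "0 \<le> \<rho>"
    using \<rho> \<open>0 \<le> r\<close> by linarith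
  ultimately show thesis
    using that[OF t0(1)] unfolding D_def by blast
qed

lemma coincides_in_ball_if_leaves:
  assumes "\<And>t. t \<le> t0 \<Longrightarrow> p t = \<gamma> t" and "0 \<le> t0" "R < dist o' (\<gamma> t0)"
  shows "coincides_in_ball o' R p \<gamma>"
  unfolding coincides_in_ball_def
proof (intro allI impI)
  fix t assume "0 \<le> t" and inside: "\<gamma> ` {0..t} \<subseteq> cball o' R"
  have "t \<le> t0"
  proof (rule ccontr)
    assume "\<not> t \<le> t0"
    then have "t0 \<in> {0..t}"
      using \<open>0 \<le> t0\<close> by simp
    then have "\<gamma> t0 \<in> cball o' R"
      using inside by blast
    then show False
      using \<open>R < dist o' (\<gamma> t0)\<close> by simp
  qed
  then show "p t = \<gamma> t"
    by (rule assms(1))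
qed

locale redirection =
  fixes o' :: "'a::metric_space" and \<gamma> \<beta> g :: "real \<Rightarrow> 'a" and q Q t0 \<rho> D :: real
  assumes gamma: "quasi_ray o' q Q \<gamma>" and q_ge_1: "1 \<le> q"
    and beta: "geodesic_ray o' \<beta>"
    and t0_nonneg: "0 \<le> t0" and rho_nonneg: "0 \<le> \<rho>"
    and D_eq: "D = dist (\<gamma> t0) (\<beta> \<rho>)"
    and g_start: "g 0 = \<gamma> t0" and g_end: "g D = \<beta> \<rho>"
    and g_isometry: "\<And>u v. u \<in> {0..D} \<Longrightarrow> v \<in> {0..D} \<Longrightarrow> dist (g u) (g v) = \<bar>u - v\<bar>"
    and quasi_minimal: "\<And>t \<rho>'. 0 \<le> t \<Longrightarrow> t \<le> t0 \<Longrightarrow> \<rho> \<le> \<rho>' \<Longrightarrow>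
                          D + (\<rho>' - \<rho>)/2 - Q \<le> dist (\<gamma> t) (\<beta> \<rho>')"
begin

definition redirected :: "real \<Rightarrow> 'a" where
  "redirected t = (if t \<le> t0 then \<gamma> t
                   else if t \<le> t0 + D/2 then g (2*(t - t0))
                   else \<beta> (\<rho> + (t - t0 - D/2)))"

abbreviation quasi_estimate :: "real \<Rightarrow> real \<Rightarrow> bool" where
  "quasi_estimate s t \<equiv> (t - s)/(9*q) - Q \<le> dist (redirected s) (redirected t) \<and>
                         dist (redirected s) (redirected t) \<le> 9*q*(t - s) + Q"

lemma Q_nonneg: "0 \<le> Q"
  using quasi_ray_Q_nonneg[OF gamma] .

lemma D_nonneg: "0 \<le> D"
  by (simp add: D_eq)

lemma gamma_dist:
  assumes "0 \<le> s" "s \<le> t"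
  shows "(t - s)/q - Q \<le> dist (\<gamma> s) (\<gamma> t) \<and> dist (\<gamma> s) (\<gamma> t) \<le> q*(t - s) + Q"
proof -
  have "\<forall>s\<ge>0. \<forall>t\<ge>0. \<bar>s - t\<bar>/q - Q \<le> dist (\<gamma> s) (\<gamma> t) \<and> dist (\<gamma> s) (\<gamma> t) \<le> q * \<bar>s - t\<bar> + Q"
    using gamma unfolding quasi_ray_def by blast
  from this[rule_format, of s t] show ?thesis
    using assms by simp
qed

lemma beta_dist: "0 \<le> v \<Longrightarrow> dist (\<beta> \<rho>) (\<beta> (\<rho> + v)) = v"
  using beta rho_nonneg unfolding geodesic_ray_def by force

lemma g_dist_start: "0 \<le> u \<Longrightarrow> u \<le> D \<Longrightarrow> dist (\<gamma> t0) (g u) = u"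
  using g_isometry[of 0 u] g_start by simp

lemma g_dist_end: "0 \<le> u \<Longrightarrow> u \<le> D \<Longrightarrow> dist (g u) (\<beta> \<rho>) = D - u"
  using g_isometry[of u D] g_end by simp

lemma quasi_estimate_gamma_gamma:
  assumes "0 \<le> s" "s \<le> t" "t \<le> t0"
  shows "quasi_estimate s t"
proof -
  define x where "x = dist (\<gamma> s) (\<gamma> t)"
  have "(t - s)/q - Q \<le> x" "x \<le> q*(t - s) + Q" "0 \<le> x"
    using gamma_dist[OF assms(1,2)] by (simp_all add: x_def)
  then have "(t - s + 0)/(9*q) - Q \<le> x \<and> x \<le> 9*q*(t - s + 0) + Q"
    using Q_nonneg assms by (intro nine_q_bounds[OF q_ge_1]) simp_all
  then show ?thesis
    using assms by (simp add: redirected_def x_def)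
qed

lemma quasi_estimate_gamma_g:
  assumes "0 \<le> s" "s \<le> t0" "t0 < t" "t \<le> t0 + D/2"
  shows "quasi_estimate s t"
proof -
  define u where "u = 2*(t - t0)"
  have u: "0 \<le> u" "u \<le> D"
    using assms by (simp_all add: u_def)
  define x where "x = dist (\<gamma> s) (g u)"
  have \<gamma>: "(t0 - s)/q - Q \<le> dist (\<gamma> s) (\<gamma> t0)" "dist (\<gamma> s) (\<gamma> t0) \<le> q*(t0 - s) + Q"
    using gamma_dist[OF assms(1,2)] by simp_all
  have "dist (\<gamma> s) (\<gamma> t0) \<le> x + u"
    using dist_triangle[of "\<gamma> s" "\<gamma> t0" "g u"] g_dist_start[OF u] by (simp add: x_def dist_commute)
  moreover have "D - Q \<le> x + (D - u)"
    using quasi_minimal[of s \<rho>] dist_triangle[of "\<gamma> s" "\<beta> \<rho>" "g u"] g_dist_end[OF u] assms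
    by (simp add: x_def)
  moreover have "x \<le> dist (\<gamma> s) (\<gamma> t0) + u"
    using dist_triangle[of "\<gamma> s" "g u" "\<gamma> t0"] g_dist_start[OF u] by (simp add: x_def)
  moreover have ts: "t - s = t0 - s + u/2"
    by (simp add: u_def field_simps)
  ultimately have "(t - s)/(9*q) - Q \<le> x \<and> x \<le> 9*q*(t - s) + Q"
    unfolding ts using \<gamma> u assms by (intro nine_q_bounds[OF q_ge_1]) simp_all
  moreover have "redirected s = \<gamma> s" "redirected t = g u"
    using assms by (simp_all add: redirected_def u_def)
  ultimately show ?thesis
    by (simp add: x_def)
qed

lemma quasi_estimate_gamma_beta:
  assumes "0 \<le> s" "s \<le> t0" "t0 + D/2 < t"
  shows "quasi_estimate s t"
proof -
  define v where "v = t - t0 - D/2"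
  have "0 \<le> v"
    using assms by (simp add: v_def)
  define x where "x = dist (\<gamma> s) (\<beta> (\<rho> + v))"
  have \<gamma>: "(t0 - s)/q - Q \<le> dist (\<gamma> s) (\<gamma> t0)" "dist (\<gamma> s) (\<gamma> t0) \<le> q*(t0 - s) + Q"
    using gamma_dist[OF assms(1,2)] by simp_all
  have t0_\<beta>: "dist (\<gamma> t0) (\<beta> (\<rho> + v)) \<le> D + v"
    using dist_triangle[of "\<gamma> t0" "\<beta> (\<rho> + v)" "\<beta> \<rho>"] beta_dist[OF \<open>0 \<le> v\<close>] by (simp add: D_eq)
  have "dist (\<gamma> s) (\<gamma> t0) \<le> x + dist (\<gamma> t0) (\<beta> (\<rho> + v))"
    using dist_triangle[of "\<gamma> s" "\<gamma> t0" "\<beta> (\<rho> + v)"] by (simp add: x_def dist_commute)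
  moreover have "D + v/2 - Q \<le> x"
    using quasi_minimal[of s "\<rho> + v"] assms \<open>0 \<le> v\<close> by (simp add: x_def)
  moreover have "x \<le> dist (\<gamma> s) (\<gamma> t0) + dist (\<gamma> t0) (\<beta> (\<rho> + v))"
    using dist_triangle by (simp add: x_def)
  ultimately have "(t0 - s)/q + (D/2 + v) \<le> 9*x + 9*Q" "x \<le> q*(t0 - s) + (D/2 + v) + (D/2 + v) + Q"
    using \<gamma> t0_\<beta> \<open>0 \<le> v\<close> D_nonneg by linarith+
  moreover have ts: "t - s = t0 - s + (D/2 + v)"
    by (simp add: v_def)
  ultimately have "(t - s)/(9*q) - Q \<le> x \<and> x \<le> 9*q*(t - s) + Q"
    unfolding ts using \<open>0 \<le> v\<close> assms D_nonneg by (intro nine_q_bounds[OF q_ge_1]) simp_all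
  moreover have "redirected s = \<gamma> s" "redirected t = \<beta> (\<rho> + v)"
    using assms D_nonneg by (simp_all add: redirected_def v_def)
  ultimately show ?thesis
    by (simp add: x_def)
qed

lemma quasi_estimate_g_g:
  assumes "t0 < s" "s \<le> t" "t \<le> t0 + D/2"
  shows "quasi_estimate s t"
proof -
  have "dist (redirected s) (redirected t) = 2*(t - s)"
    using assms g_isometry[of "2*(s - t0)" "2*(t - t0)"] by (simp add: redirected_def)
  moreover have "(0 + (t - s))/(9*q) - Q \<le> 2*(t - s) \<and> 2*(t - s) \<le> 9*q*(0 + (t - s)) + Q"
    using assms Q_nonneg by (intro nine_q_bounds[OF q_ge_1]) simp_all
  ultimately show ?thesis
    by simp
qed

lemma quasi_estimate_g_beta:
  assumes "t0 < s" "s \<le> t0 + D/2" "t0 + D/2 < t"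
  shows "quasi_estimate s t"
proof -
  define u where "u = 2*(s - t0)"
  have u: "0 \<le> u" "u \<le> D"
    using assms by (simp_all add: u_def)
  define v where "v = t - t0 - D/2"
  have "0 \<le> v"
    using assms by (simp add: v_def)
  define x where "x = dist (g u) (\<beta> (\<rho> + v))"
  have "D + v/2 - Q \<le> u + x"
    using quasi_minimal[of t0 "\<rho> + v"] t0_nonneg \<open>0 \<le> v\<close> g_dist_start[OF u]
      dist_triangle[of "\<gamma> t0" "\<beta> (\<rho> + v)" "g u"] by (simp add: x_def)
  moreover have "x \<le> (D - u) + v"
    using dist_triangle[of "g u" "\<beta> (\<rho> + v)" "\<beta> \<rho>"] g_dist_end[OF u] beta_dist[OF \<open>0 \<le> v\<close>]
    by (simp add: x_def)
  moreover have ts: "t - s = 0 + (D/2 - u/2 + v)"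
    by (simp add: u_def v_def field_simps)
  ultimately have "(t - s)/(9*q) - Q \<le> x \<and> x \<le> 9*q*(t - s) + Q"
    unfolding ts using u \<open>0 \<le> v\<close> Q_nonneg by (intro nine_q_bounds[OF q_ge_1]) simp_all
  moreover have "redirected s = g u" "redirected t = \<beta> (\<rho> + v)"
    using assms by (simp_all add: redirected_def u_def v_def)
  ultimately show ?thesis
    by (simp add: x_def)
qed

lemma quasi_estimate_beta_beta:
  assumes "t0 + D/2 < s" "s \<le> t"
  shows "quasi_estimate s t"
proof -
  have "dist (redirected s) (redirected t) = t - s"
    using assms beta rho_nonneg D_nonneg by (simp add: redirected_def geodesic_ray_def)
  moreover have "(0 + (t - s))/(9*q) - Q \<le> t - s \<and> t - s \<le> 9*q*(0 + (t - s)) + Q"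
    using assms Q_nonneg by (intro nine_q_bounds[OF q_ge_1]) simp_all
  ultimately show ?thesis
    by simp
qed

lemma redirected_quasi_ray: "quasi_ray o' (9*q) Q redirected"
proof (rule quasi_rayI_ordered)
  show "redirected 0 = o'"
    using gamma t0_nonneg by (simp add: redirected_def quasi_ray_def)
next
  fix s t :: real
  assume "0 \<le> s" "s \<le> t"
  consider "t \<le> t0" | "s \<le> t0" "t0 < t" "t \<le> t0 + D/2" | "s \<le> t0" "t0 + D/2 < t"
    | "t0 < s" "t \<le> t0 + D/2" | "t0 < s" "s \<le> t0 + D/2" "t0 + D/2 < t" | "t0 + D/2 < s"
    by linarith
  then show "quasi_estimate s t"
    using \<open>0 \<le> s\<close> \<open>s \<le> t\<close>
    by cases (simp_all add: quasi_estimate_gamma_gamma quasi_estimate_gamma_g quasi_estimate_gamma_beta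
      quasi_estimate_g_g quasi_estimate_g_beta quasi_estimate_beta_beta)
qed

lemma redirected_eventually_coincides:
  assumes "t0 + D/2 < \<rho>"
  shows "eventually_coincides redirected \<beta>"
  unfolding eventually_coincides_def
proof (intro exI conjI allI impI)
  show "0 < \<rho> - t0 - D/2" "0 < t0 + D/2 + 1"
    using assms t0_nonneg D_nonneg by simp_all
  fix t assume "t0 + D/2 + 1 \<le> t"
  then show "redirected t = \<beta> (t + (\<rho> - t0 - D/2))"
    using t0_nonneg D_nonneg by (simp add: redirected_def algebra_simps)
qed

end

lemma exists_close_pair_from_sequence:
  fixes \<beta> \<gamma> :: "real \<Rightarrow> 'a::metric_space" and r :: "nat \<Rightarrow> real"
  assumes "\<epsilon> < 1" "filterlim r at_top sequentially" "\<And>n. 0 \<le> r n"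
    and close: "\<And>n. infdist (\<beta> (r n)) (\<gamma> ` {0..}) \<le> \<epsilon> * r n"
  shows "\<exists>\<rho>\<ge>0. \<exists>t\<ge>0. K + dist (\<beta> \<rho>) (\<gamma> t) < \<rho>"
proof -
  obtain n where "(K + 1)/(1 - \<epsilon>) \<le> r n"
    using assms(2) unfolding filterlim_at_top eventually_sequentially by blast
  then have "K + 1 + \<epsilon> * r n \<le> r n"
    using assms(1) by (simp add: pos_divide_le_eq algebra_simps)
  have ne: "\<gamma> ` {0..} \<noteq> {}"
    by simp
  have "(INF a\<in>\<gamma> ` {0..}. dist (\<beta> (r n)) a) < \<epsilon> * r n + 1"
    using close[of n] unfolding infdist_notempty[OF ne] by linarith
  moreover have bdd: "bdd_below (dist (\<beta> (r n)) ` \<gamma> ` {0..})"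
    by (rule bdd_belowI2[of _ 0]) simp
  ultimately obtain t where "0 \<le> t" "dist (\<beta> (r n)) (\<gamma> t) < \<epsilon> * r n + 1"
    using cINF_less_iff[OF ne bdd] by auto
  then show ?thesis
    using \<open>K + 1 + \<epsilon> * r n \<le> r n\<close> assms(3)[of n] by (intro exI[of _ "r n"] conjI exI[of _ t]) linarith+
qed

lemma unbounded_if_close_to_geodesic_ray:
  assumes \<beta>: "geodesic_ray o' \<beta>" and close: "\<And>K. \<exists>\<rho>\<ge>0. \<exists>t\<ge>0. K + dist (\<beta> \<rho>) (\<gamma> t) < \<rho>"
  shows "\<not> bounded (\<gamma> ` {0..})"
proof
  assume "bounded (\<gamma> ` {0..})"
  then obtain B where B: "\<And>t. 0 \<le> t \<Longrightarrow> dist o' (\<gamma> t) \<le> B"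
    unfolding bounded_any_center[of _ o'] by auto
  obtain \<rho> t where "0 \<le> \<rho>" "0 \<le> t" "B + dist (\<beta> \<rho>) (\<gamma> t) < \<rho>"
    using close[of B] by blast
  moreover have "\<rho> \<le> dist o' (\<gamma> t) + dist (\<beta> \<rho>) (\<gamma> t)"
    using dist_triangle[of o' "\<beta> \<rho>" "\<gamma> t"] geodesic_ray_dist_base[OF \<beta> \<open>0 \<le> \<rho>\<close>]
    by (simp add: dist_commute)
  ultimately show False
    using B by fastforce
qed

theorem mainTheorem4:
  fixes o' :: "'a::heine_borel"
    and \<beta> \<gamma> :: "real \<Rightarrow> 'a"
    and q Q \<epsilon> :: real
    and r :: "nat \<Rightarrow> real"
  assumes "geodesic_space TYPE('a)"
    and "0 < \<epsilon>" and "\<epsilon> < 1"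
    and "geodesic_ray o' \<beta>"
    and "quasi_ray o' q Q \<gamma>"
    and "strict_mono r"
    and "\<And>n. 0 \<le> r n"
    and "filterlim r at_top sequentially"
    and "\<And>n. infdist (\<beta> (r n)) (\<gamma> ` {0..}) \<le> \<epsilon> * r n"
  shows "quasi_redirected o' (9 * q) Q \<gamma> \<beta>"
  unfolding quasi_redirected_def
proof (intro allI impI)
  have close: "\<exists>\<rho>\<ge>0. \<exists>t\<ge>0. K + dist (\<beta> \<rho>) (\<gamma> t) < \<rho>" for K
    using exists_close_pair_from_sequence[OF assms(3,8,7,9)] .
  have "1 \<le> q"
    using quasi_ray_ge_one[OF assms(5) unbounded_if_close_to_geodesic_ray[OF assms(4) close]] .
  fix R :: real
  obtain r1 t1 where "0 \<le> r1" "0 \<le> t1" "R + Q + dist (\<beta> r1) (\<gamma> t1) < r1"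
    using close[of "R + Q"] by auto
  then obtain t0 \<rho> where t0: "0 \<le> t0" "0 \<le> \<rho>" "R < dist o' (\<gamma> t0)"
    "t0 + dist (\<gamma> t0) (\<beta> \<rho>) / 2 < \<rho>"
    and minimal: "\<And>t \<rho>'. 0 \<le> t \<Longrightarrow> t \<le> t0 \<Longrightarrow> \<rho> \<le> \<rho>' \<Longrightarrow>
       dist (\<gamma> t0) (\<beta> \<rho>) + (\<rho>' - \<rho>)/2 - Q \<le> dist (\<gamma> t) (\<beta> \<rho>')"
    using far_redirection_point[OF assms(5,4)] by metis
  obtain g where "g 0 = \<gamma> t0" "g (dist (\<gamma> t0) (\<beta> \<rho>)) = \<beta> \<rho>"
    "\<And>u v. u \<in> {0..dist (\<gamma> t0) (\<beta> \<rho>)} \<Longrightarrow> v \<in> {0..dist (\<gamma> t0) (\<beta> \<rho>)} \<Longrightarrow>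
       dist (g u) (g v) = \<bar>u - v\<bar>"
    using assms(1) unfolding geodesic_space_def by blast
  then interpret redirection o' \<gamma> \<beta> g q Q t0 \<rho> "dist (\<gamma> t0) (\<beta> \<rho>)"
    using assms(4,5) \<open>1 \<le> q\<close> t0 minimal by unfold_locales auto
  show "\<exists>\<gamma>'. quasi_ray o' (9 * q) Q \<gamma>' \<and> coincides_in_ball o' R \<gamma>' \<gamma> \<and> eventually_coincides \<gamma>' \<beta>"
    using redirected_quasi_ray redirected_eventually_coincides[OF t0(4)] t0(1,3)
      coincides_in_ball_if_leaves[of t0 redirected \<gamma>] by (auto simp: redirected_def)
qed

end
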